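(* For every $n\ge2$, $S_{2,0}(2n-1)=-\dfrac{3B_{2n}}{n}$.
   Context: $B_m$ denotes the $m$-th Bernoulli number. Let $a_0,a_1,\dots$ be indeterminates and $a(x)=\sum_{i\ge0}a_ix^i$. For a positive integer $j$ set $G(x)=\prod_{i=0}^{j-1}\frac{1+a(x)x^2}{1+ix}$, $H(x)=\prod_{i=1-j}^{-1}\frac{1+ix}{1+a(x)x^2}$, $u=2j-1$, $v=j(j-1)$. For each $n\ge1$ there are unique polynomials $S_0(n),\dots,S_n(n)\in\mathbb{Q}[a_0,\dots,a_{n-2}]$, independent of $j$, such that for every positive integer $j$ the coefficient of $x^{n-1}$ in $\frac{G(x)-H(x)}{x^2}(1+a(x)x^2)$ equals $u\big(a_{n-1}+S_0(n)+\sum_{i=1}^nS_i(n)v^i\big)$. For $1\le i\le n$, $S_{i,0}(n)\in\mathbb{Q}$ denotes the constant term of $S_i(n)$. *)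

theory Defs
  imports "HOL-Computational_Algebra.Formal_Power_Series"
begin

text \<open>Bernoulli numbers via the standard recursion
  B_0 = 1, B_m = -(1/(m+1)) * sum_{k<m} binom(m+1,k) B_k  (so B_1 = -1/2;
  the convention for B_1 is irrelevant for even indices).\<close>
fun bernoulli :: "nat \<Rightarrow> rat" where
  "bernoulli m = (if m = 0 then 1
     else - (\<Sum>k<m. of_nat (Suc m choose k) * bernoulli k) / of_nat (Suc m))"

text \<open>The power series a(x) = sum a_i x^i, with the indeterminates a_i evaluated
  at rational values given by the sequence a.\<close>
definition aser :: "(nat \<Rightarrow> rat) \<Rightarrow> rat fps" where
  "aser a = Abs_fps a"

definition Gser :: "(nat \<Rightarrow> rat) \<Rightarrow> nat \<Rightarrow> rat fps" where
  "Gser a j = (\<Prod>i\<in>{0..<j}. (1 + aser a * fps_X ^ 2) / (1 + of_nat i * fps_X))"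

definition Hser :: "(nat \<Rightarrow> rat) \<Rightarrow> nat \<Rightarrow> rat fps" where
  "Hser a j = (\<Prod>i\<in>{1 - int j..-1}. (1 + of_int i * fps_X) / (1 + aser a * fps_X ^ 2))"

text \<open>Coefficient of x^(n-1) in ((G(x) - H(x)) / x^2) * (1 + a(x) x^2).
  Division by x^2 is fps_shift 2 (exact, as G - H = O(x^2)).\<close>
definition lhs_coeff :: "nat \<Rightarrow> (nat \<Rightarrow> rat) \<Rightarrow> nat \<Rightarrow> rat" where
  "lhs_coeff n a j =
     fps_nth (fps_shift 2 (Gser a j - Hser a j) * (1 + aser a * fps_X ^ 2)) (n - 1)"

text \<open>S is a valid choice of S_0(n),...,S_n(n), each given as a function of the
  (rational values of the) indeterminates a_0, a_1, ...: for every valuation a and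
  every positive integer j the coefficient identity holds, with u = 2j-1, v = j(j-1).
  A polynomial identity over Q is the same as an identity under all rational
  valuations, so the constant term S_{i,0}(n) is S i evaluated at a = 0.\<close>
definition S_spec :: "nat \<Rightarrow> (nat \<Rightarrow> (nat \<Rightarrow> rat) \<Rightarrow> rat) \<Rightarrow> bool" where
  "S_spec n S \<longleftrightarrow> (\<forall>a j. j \<ge> 1 \<longrightarrow>
     lhs_coeff n a j =
       (2 * of_nat j - 1) * (a (n - 1) + S 0 a +
          (\<Sum>i=1..n. S i a * (of_nat j * (of_nat j - 1)) ^ i)))"

end

theory Submission
  imports Defs "HOL-Computational_Algebra.Polynomial"
begin

text \<open>Write A = 1 + a(x) x^2, c_k for the k-th coefficient of A'/A and P_m(j) for the power sum
  polynomial, P_m(j) = sum_{i<j} i^m. Both G_j A and H_j A have constant term 1, and the k-th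
  coefficients of their logarithmic derivatives are c_k (j + 1) - (-1)^k P_{k+1}(j) and
  c_k (2 - j) - P_{k+1}(j). Solving E' = E (E'/E) coefficientwise, every coefficient of G_j A and
  H_j A is therefore a polynomial in j, and the coefficient of x^(N-1) in the definition of
  S_i(N) is L(j), the difference of their (N+1)-st coefficients, a polynomial of degree at
  most 2(N+1). As P_m(1 - x) = (-1)^(m+1) P_m(x), the
  substitution j \<mapsto> 1 - j exchanges the two logarithmic derivatives, so L(1 - x) = - L(x) and
  L = (2x - 1) q(x(x - 1)); the coefficients of q are the S_i.

  For a = 0 and N = 2n - 1 the coefficients of L in degrees 0, 1, 2 are 0, B_{2n}/n, 0: the linear
  coefficient of P_m is B_m and the quadratic one vanishes for even m \<ge> 4. Comparing with
  (2x - 1)(S_0 + S_1 x(x - 1) + S_2 x^2 (x - 1)^2 + ...) gives S_2 = -3 B_{2n}/n.\<close>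

unbundle fps_syntax

lemma poly_eqI_of_nat:
  fixes p q :: "'a::{idom,ring_char_0} poly"
  assumes "\<And>j. j \<ge> k \<Longrightarrow> poly p (of_nat j) = poly q (of_nat j)"
  shows "p = q"
proof (rule ccontr)
  assume "p \<noteq> q"
  then have "finite {x. poly (p - q) x = 0}"
    by (intro poly_roots_finite) simp
  moreover have "of_nat ` {k..} \<subseteq> {x. poly (p - q) x = 0}"
    using assms by auto
  moreover have "infinite (of_nat ` {k..} :: 'a set)"
    using infinite_Ici[of k] by (auto dest: finite_imageD simp: inj_on_def)
  ultimately show False
    using finite_subset by blast
qed

lemma poly_eq_sum_coeffs:
  fixes q :: "'a::comm_semiring_1 poly"
  assumes "degree q \<le> N"
  shows "poly q x = coeff q 0 + (\<Sum>i=1..N. coeff q i * x ^ i)"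
proof -
  have "poly q x = (\<Sum>i\<le>N. coeff q i * x ^ i)"
    by (subst poly_as_sum_of_monoms'[OF assms, symmetric]) (simp add: poly_sum poly_monom)
  then show ?thesis
    by (simp add: atMost_atLeast0 sum.atLeast_Suc_atMost)
qed

lemma pX_power_eq_monom: "[:0, 1:] ^ k = monom (1::'a::comm_ring_1) k"
  by (simp add: monom_altdef)

lemma coeff_mult_1: "coeff (p * q) 1 = coeff p 0 * coeff q 1 + coeff p 1 * coeff q 0"
  by (simp add: coeff_mult)

lemma coeff_mult_2:
  "coeff (p * q) 2 = coeff p 0 * coeff q 2 + coeff p 1 * coeff q 1 + coeff p 2 * coeff q 0"
  by (simp add: coeff_mult eval_nat_numeral atMost_Suc algebra_simps)

lemma coeffs_pcompose_x2_minus_x: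
  fixes q :: "'a::comm_ring_1 poly"
  shows "coeff (q \<circ>\<^sub>p [:0, -1, 1:]) 0 = coeff q 0"
    and "coeff (q \<circ>\<^sub>p [:0, -1, 1:]) 1 = - coeff q 1"
    and "coeff (q \<circ>\<^sub>p [:0, -1, 1:]) 2 = coeff q 1 + coeff q 2"
proof -
  have coeff_0: "coeff (p \<circ>\<^sub>p [:0, -1, 1:]) 0 = coeff p 0" for p :: "'a poly"
    by (cases p) (simp add: pcompose_pCons)
  have coeff_1: "coeff (p \<circ>\<^sub>p [:0, -1, 1:]) (Suc 0) = - coeff p (Suc 0)" for p :: "'a poly"
    by (cases p) (simp add: pcompose_pCons coeff_0 poly_0_coeff_0)
  show "coeff (q \<circ>\<^sub>p [:0, -1, 1:]) 0 = coeff q 0" "coeff (q \<circ>\<^sub>p [:0, -1, 1:]) 1 = - coeff q 1"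
    by (simp_all add: coeff_0 coeff_1 poly_0_coeff_0)
  show "coeff (q \<circ>\<^sub>p [:0, -1, 1:]) 2 = coeff q 1 + coeff q 2"
    by (cases q) (simp add: pcompose_pCons coeff_0 coeff_1 poly_0_coeff_0 numeral_2_eq_2)
qed

lemma pcompose_reflect_invariant_decomp:
  fixes p :: "'a::field_char_0 poly"
  assumes "p \<circ>\<^sub>p [:1, -1:] = p"
  shows "\<exists>q. p = q \<circ>\<^sub>p [:0, -1, 1:]"
  using assms
proof (induction "degree p" arbitrary: p rule: less_induct)
  case less
  define V :: "'a poly" where "V = [:0, -1, 1:]"
  define c where "c = coeff p 0"
  define r where "r = p - [:c:]"
  have r_sym: "r \<circ>\<^sub>p [:1, -1:] = r"
    using less.prems by (simp add: r_def pcompose_diff)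
  show ?case
  proof (cases "r = 0")
    case True
    then show ?thesis
      by (intro exI[of _ "[:c:]"]) (simp add: r_def)
  next
    case False
    have r0: "poly r 0 = 0"
      by (simp add: r_def c_def poly_0_coeff_0)
    then obtain r1 where r1: "r = [:0, 1:] * r1"
      using poly_eq_0_iff_dvd[of r 0] by (auto elim: dvdE)
    have "poly r 1 = poly r 0"
      using arg_cong[OF r_sym, of "\<lambda>p. poly p 0"] by (simp add: poly_pcompose)
    then have "poly r1 1 = 0"
      using r0 r1 by simp
    then obtain r2 where "r1 = [:-1, 1:] * r2"
      using poly_eq_0_iff_dvd[of r1 1] by (auto elim: dvdE)
    then have r_eq: "r = V * r2"
      using r1 by (simp add: V_def)
    have "V \<circ>\<^sub>p [:1, -1:] = V"
      by (rule poly_ext) (simp add: V_def poly_pcompose algebra_simps)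
    then have "V * (r2 \<circ>\<^sub>p [:1, -1:]) = V * r2"
      using r_sym by (simp only: r_eq pcompose_mult)
    moreover have V_nonzero: "V \<noteq> 0"
      by (simp add: V_def)
    ultimately have r2_sym: "r2 \<circ>\<^sub>p [:1, -1:] = r2"
      by simp
    have "degree r \<le> degree p"
      unfolding r_def by (intro degree_diff_le) auto
    moreover have "degree r = degree V + degree r2"
      using False V_nonzero unfolding r_eq by (intro degree_mult_eq) auto
    ultimately have "degree r2 < degree p"
      by (simp add: V_def)
    then obtain q2 where "r2 = q2 \<circ>\<^sub>p V"
      using less.hyps r2_sym by (auto simp: V_def)
    then have "p = pCons c q2 \<circ>\<^sub>p V"
      using r_eq by (simp add: pcompose_pCons r_def algebra_simps)
    then show ?thesis
      by (auto simp: V_def)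
  qed
qed

lemma pcompose_reflect_anti_invariant_decomp:
  fixes p :: "'a::field_char_0 poly"
  assumes "p \<circ>\<^sub>p [:1, -1:] = - p"
  shows "\<exists>q. p = [:-1, 2:] * (q \<circ>\<^sub>p [:0, -1, 1:])"
proof -
  define W :: "'a poly" where "W = [:-1, 2:]"
  have "poly p (1 / 2) = - poly p (1 / 2)"
    using arg_cong[OF assms, of "\<lambda>p. poly p (1 / 2)"] by (simp add: poly_pcompose)
  then have "poly p (1 / 2) = 0"
    by simp
  then obtain r where r: "p = [:- (1 / 2), 1:] * r"
    using poly_eq_0_iff_dvd[of p "1 / 2"] by (auto elim: dvdE)
  define p1 where "p1 = smult (1 / 2) r"
  have p_eq: "p = W * p1"
    unfolding r p1_def by (intro poly_ext) (simp add: W_def algebra_simps)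
  have W_reflect: "W \<circ>\<^sub>p [:1, -1:] = - W"
    by (rule poly_ext) (simp add: W_def poly_pcompose algebra_simps)
  have "W \<noteq> 0"
    by (simp add: W_def)
  then have "p1 \<circ>\<^sub>p [:1, -1:] = p1"
    using assms unfolding p_eq pcompose_mult W_reflect by simp
  then obtain q where "p1 = q \<circ>\<^sub>p [:0, -1, 1:]"
    using pcompose_reflect_invariant_decomp by blast
  then show ?thesis
    using p_eq by (auto simp: W_def)
qed

text \<open>Telescoping (j + 1)^(m+1) - j^(m+1) gives this recursion, which is that of
  \<^const>\<open>bernoulli\<close> with the extra term x^(m+1).\<close>
fun power_sum_poly :: "nat \<Rightarrow> rat poly" where
  "power_sum_poly m = smult (1 / of_nat (Suc m))
     ([:0, 1:] ^ Suc m - (\<Sum>k<m. smult (of_nat (Suc m choose k)) (power_sum_poly k)))"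

declare power_sum_poly.simps [simp del] bernoulli.simps [simp del]

lemma poly_power_sum_poly: "poly (power_sum_poly m) (of_nat j) = (\<Sum>i<j. of_nat i ^ m)"
proof (induction m rule: less_induct)
  case (less m)
  have binomial: "of_nat (Suc i) ^ Suc m - of_nat i ^ Suc m
      = (\<Sum>k<Suc m. of_nat (Suc m choose k) * of_nat i ^ k :: rat)" for i
    using binomial_ring[of "of_nat i :: rat" 1 "Suc m"]
    by (simp add: lessThan_Suc_atMost[symmetric] add.commute)
  have "(of_nat j :: rat) ^ Suc m = (\<Sum>i<j. of_nat (Suc i) ^ Suc m - of_nat i ^ Suc m)"
    by (subst sum_lessThan_telescope) (simp add: power_0_left)
  also have "\<dots> = (\<Sum>k<Suc m. of_nat (Suc m choose k) * (\<Sum>i<j. of_nat i ^ k))"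
    unfolding binomial by (simp add: sum.swap sum_distrib_left)
  also have "\<dots> = (\<Sum>k<m. of_nat (Suc m choose k) * poly (power_sum_poly k) (of_nat j))
      + of_nat (Suc m) * (\<Sum>i<j. of_nat i ^ m)"
    using less by simp
  finally show ?case
    by (subst power_sum_poly.simps) (simp add: poly_sum field_simps del: of_nat_Suc)
qed

lemma power_sum_poly_pcompose_shift:
  "power_sum_poly m \<circ>\<^sub>p [:1, 1:] = power_sum_poly m + monom 1 m"
  by (rule poly_eqI_of_nat[of 0]) (simp add: poly_pcompose poly_power_sum_poly poly_monom
      flip: of_nat_Suc)

lemma poly_power_sum_poly_shift:
  "poly (power_sum_poly m) (x + 1) = poly (power_sum_poly m) x + x ^ m"
  using arg_cong[OF power_sum_poly_pcompose_shift, of "\<lambda>p. poly p x"]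
  by (simp add: poly_pcompose poly_monom add.commute)

lemma power_sum_poly_pcompose_reflect:
  assumes "m \<ge> 1"
  shows "power_sum_poly m \<circ>\<^sub>p [:1, -1:] = smult ((-1) ^ Suc m) (power_sum_poly m)"
proof -
  define g where "g x = poly (power_sum_poly m) (1 - x) - (-1) ^ Suc m * poly (power_sum_poly m) x"
    for x
  have periodic: "g (1 + x) = g x" for x
    using poly_power_sum_poly_shift[of m "-x"] poly_power_sum_poly_shift[of m x]
    by (simp add: g_def power_minus[of x] algebra_simps)
  have "g 0 = 0"
    using poly_power_sum_poly[of m 0] poly_power_sum_poly[of m 1] assms by (simp add: g_def)
  then have "g (of_nat j) = 0" for j
    by (induction j) (simp_all add: periodic)
  then show ?thesis
    by (intro poly_eqI_of_nat[of 0]) (simp add: g_def poly_pcompose eq_neg_iff_add_eq_0)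
qed

lemma poly_power_sum_poly_reflect:
  "m \<ge> 1 \<Longrightarrow> poly (power_sum_poly m) (1 - x) = (-1) ^ Suc m * poly (power_sum_poly m) x"
  using arg_cong[OF power_sum_poly_pcompose_reflect, of m "\<lambda>p. poly p x"]
  by (simp add: poly_pcompose)

lemma coeff_power_sum_poly_0: "coeff (power_sum_poly m) 0 = 0"
  using poly_power_sum_poly[of m 0] by (simp add: poly_0_coeff_0)

lemma coeff_power_sum_poly_1: "coeff (power_sum_poly m) 1 = bernoulli m"
proof (induction m rule: less_induct)
  case (less m)
  show ?case
  proof (cases "m = 0")
    case True
    then show ?thesis
      by (subst power_sum_poly.simps, subst bernoulli.simps) (simp add: pX_power_eq_monom)
  next
    case False
    then have "coeff (power_sum_poly m) 1
        = - (\<Sum>k<m. of_nat (Suc m choose k) * coeff (power_sum_poly k) 1) / of_nat (Suc m)"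
      by (subst power_sum_poly.simps)
        (simp add: pX_power_eq_monom coeff_sum divide_inverse mult.commute del: of_nat_Suc)
    also have "\<dots> = bernoulli m"
      using False less by (subst bernoulli.simps) simp
    finally show ?thesis .
  qed
qed

lemma degree_power_sum_poly: "degree (power_sum_poly m) \<le> Suc m"
proof (induction m rule: less_induct)
  case (less m)
  have "degree (\<Sum>k<m. smult (of_nat (Suc m choose k)) (power_sum_poly k)) \<le> Suc m"
    using less by (intro degree_sum_le) (force intro: order.trans[OF degree_smult_le])+
  moreover have "degree ([:0, 1::rat:] ^ Suc m) \<le> Suc m"
    by (simp add: pX_power_eq_monom degree_monom_le)
  ultimately show ?case
    by (subst power_sum_poly.simps)
      (meson degree_diff_le degree_smult_le order.trans)
qed

lemma coeff_power_sum_poly_2: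
  assumes "even m" "m \<ge> 4"
  shows "coeff (power_sum_poly m) 2 = 0"
proof -
  \<comment> \<open>The second derivative has equal values at 0 and 1 by the shift identity and opposite
    values by the reflection identity.\<close>
  define P where "P = power_sum_poly m"
  define P2 where "P2 = pderiv (pderiv P)"
  have "P2 \<circ>\<^sub>p [:1, 1:] = pderiv (pderiv (P \<circ>\<^sub>p [:1, 1:]))"
    by (simp add: pderiv_pcompose P2_def pderiv_pCons)
  also have "\<dots> = P2 + pderiv (pderiv (monom 1 m))"
    by (simp add: P_def P2_def power_sum_poly_pcompose_shift pderiv_add)
  finally have "poly (P2 \<circ>\<^sub>p [:1, 1:]) 0 = poly (P2 + pderiv (pderiv (monom 1 m))) 0"
    by simp
  then have "poly P2 1 = poly P2 0"
    using assms by (simp add: poly_pcompose pderiv_monom poly_monom)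
  moreover have "P2 \<circ>\<^sub>p [:1, -1:] = pderiv (pderiv (P \<circ>\<^sub>p [:1, -1:]))"
    by (simp add: pderiv_pcompose P2_def pderiv_pCons pderiv_minus)
  then have "P2 \<circ>\<^sub>p [:1, -1:] = - P2"
    using assms by (simp add: P_def P2_def power_sum_poly_pcompose_reflect pderiv_minus)
  then have "poly (P2 \<circ>\<^sub>p [:1, -1:]) 0 = poly (- P2) 0"
    by simp
  then have "poly P2 1 = - poly P2 0"
    by (simp add: poly_pcompose)
  moreover have "poly P2 0 = 2 * coeff P 2"
    by (simp add: P2_def poly_0_coeff_0 coeff_pderiv numeral_2_eq_2)
  ultimately show ?thesis
    by (simp add: P_def)
qed

definition fps_logderiv :: "'a::field fps \<Rightarrow> 'a fps" where
  "fps_logderiv f = fps_deriv f * inverse f"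

lemma fps_deriv_eq_mult_logderiv:
  "f $ 0 \<noteq> 0 \<Longrightarrow> fps_deriv f = f * fps_logderiv f"
  by (simp add: fps_logderiv_def mult.left_commute inverse_mult_eq_1')

lemma fps_logderiv_mult:
  fixes f g :: "'a::field fps"
  assumes "f $ 0 \<noteq> 0" "g $ 0 \<noteq> 0"
  shows "fps_logderiv (f * g) = fps_logderiv f + fps_logderiv g"
proof -
  have "fps_logderiv (f * g)
      = fps_deriv f * inverse f * (g * inverse g) + fps_deriv g * inverse g * (f * inverse f)"
    by (simp add: fps_logderiv_def fps_inverse_mult algebra_simps)
  then show ?thesis
    using assms by (simp add: fps_logderiv_def inverse_mult_eq_1')
qed

lemma fps_logderiv_inverse:
  fixes f :: "'a::field fps"
  assumes "f $ 0 \<noteq> 0"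
  shows "fps_logderiv (inverse f) = - fps_logderiv f"
proof -
  have "fps_logderiv (inverse f) = - fps_deriv f * inverse f * (f * inverse f)"
    using assms by (simp add: fps_logderiv_def fps_inverse_deriv fps_inverse_idempotent
        power2_eq_square algebra_simps)
  then show ?thesis
    using assms by (simp add: fps_logderiv_def inverse_mult_eq_1')
qed

lemma fps_logderiv_divide:
  fixes f g :: "'a::field fps"
  assumes "f $ 0 \<noteq> 0" "g $ 0 \<noteq> 0"
  shows "fps_logderiv (f / g) = fps_logderiv f - fps_logderiv g"
  using assms by (simp add: fps_divide_unit fps_logderiv_mult fps_logderiv_inverse)

lemma fps_nth_0_prod: "(\<Prod>i\<in>I. f i) $ 0 = (\<Prod>i\<in>I. f i $ 0)"
  by (induction I rule: infinite_finite_induct) auto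

lemma fps_logderiv_prod:
  fixes f :: "'b \<Rightarrow> 'a::field fps"
  assumes "\<And>i. i \<in> I \<Longrightarrow> f i $ 0 \<noteq> 0"
  shows "fps_logderiv (\<Prod>i\<in>I. f i) = (\<Sum>i\<in>I. fps_logderiv (f i))"
  using assms
proof (induction I rule: infinite_finite_induct)
  case (insert i I)
  then show ?case
    by (simp add: fps_logderiv_mult fps_nth_0_prod)
qed (simp_all add: fps_logderiv_def)

lemma fps_logderiv_prod_divide:
  fixes f g :: "'b \<Rightarrow> 'a::field fps"
  assumes "\<And>i. i \<in> I \<Longrightarrow> f i $ 0 \<noteq> 0" "\<And>i. i \<in> I \<Longrightarrow> g i $ 0 \<noteq> 0"
  shows "fps_logderiv (\<Prod>i\<in>I. f i / g i) = (\<Sum>i\<in>I. fps_logderiv (f i) - fps_logderiv (g i))"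
  using assms by (simp add: fps_logderiv_prod fps_logderiv_divide)

lemma fps_logderiv_linear:
  "fps_logderiv (1 + fps_const (c::'a::field) * fps_X) $ k = c * (- c) ^ k"
proof -
  have "(1 + fps_const c * fps_X) * Abs_fps (\<lambda>k. (- c) ^ k) = 1"
  proof (rule fps_ext)
    show "((1 + fps_const c * fps_X) * Abs_fps (\<lambda>k. (- c) ^ k)) $ n = 1 $ n" for n
      by (cases n) (simp_all add: algebra_simps)
  qed
  then have "inverse (1 + fps_const c * fps_X) = Abs_fps (\<lambda>k. (- c) ^ k)"
    by (rule fps_inverse_unique)
  then show ?thesis
    by (simp add: fps_logderiv_def)
qed

text \<open>The coefficients of the solution of E' = E D with E(0) = 1, as polynomials in a parameter,
  when the coefficients of D are the polynomials D k in that parameter.\<close>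
fun ode_coeff :: "(nat \<Rightarrow> 'a::field_char_0 poly) \<Rightarrow> nat \<Rightarrow> 'a poly" where
  "ode_coeff D 0 = 1"
| "ode_coeff D (Suc m) = smult (1 / of_nat (Suc m)) (\<Sum>k\<le>m. ode_coeff D k * D (m - k))"

declare ode_coeff.simps(2) [simp del]

lemma fps_nth_eq_ode_coeff:
  fixes E :: "'a::field_char_0 fps"
  assumes "E $ 0 = 1" and "\<And>k. fps_logderiv E $ k = poly (D k) x"
  shows "E $ m = poly (ode_coeff D m) x"
proof (induction m rule: less_induct)
  case (less m)
  show ?case
  proof (cases m)
    case 0
    then show ?thesis using assms by simp
  next
    case (Suc m')
    have "fps_deriv E $ m' = (E * fps_logderiv E) $ m'"
      using assms(1) by (simp add: fps_deriv_eq_mult_logderiv)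
    then have "of_nat (Suc m') * E $ Suc m' = (E * fps_logderiv E) $ m'"
      by (simp add: fps_deriv_nth del: of_nat_Suc)
    also have "\<dots> = (\<Sum>k\<le>m'. poly (ode_coeff D k) x * poly (D (m' - k)) x)"
      using less Suc assms(2) by (auto simp: fps_mult_nth atLeast0AtMost intro!: sum.cong)
    finally show ?thesis
      using Suc by (simp add: ode_coeff.simps(2) poly_sum field_simps del: of_nat_Suc)
  qed
qed

lemma poly_ode_coeff_compose:
  assumes "\<And>k x. poly (D' k) x = poly (D k) (f x)"
  shows "poly (ode_coeff D' m) x = poly (ode_coeff D m) (f x)"
proof (induction m arbitrary: x rule: less_induct)
  case (less m)
  then show ?case
    using assms by (cases m) (simp_all add: ode_coeff.simps(2) poly_sum)
qed

lemma degree_ode_coeff: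
  assumes "\<And>k. degree (D k) \<le> k + 2"
  shows "degree (ode_coeff D m) \<le> 2 * m"
proof (induction m rule: less_induct)
  case (less m)
  show ?case
  proof (cases m)
    case 0
    then show ?thesis by simp
  next
    case (Suc m')
    have "degree (ode_coeff D k * D (m' - k)) \<le> 2 * m" if "k \<le> m'" for k
      using degree_mult_le[of "ode_coeff D k" "D (m' - k)"] less[of k] assms[of "m' - k"] that Suc
      by linarith
    then have "degree (\<Sum>k\<le>m'. ode_coeff D k * D (m' - k)) \<le> 2 * m"
      by (intro degree_sum_le) auto
    then show ?thesis
      using Suc by (simp add: ode_coeff.simps(2) del: of_nat_Suc)
  qed
qed

lemma coeff_ode_coeff_0:
  assumes "\<And>k. coeff (D k) 0 = 0"
  shows "coeff (ode_coeff D m) 0 = (if m = 0 then 1 else 0)"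
  by (cases m) (simp_all add: ode_coeff.simps(2) coeff_sum coeff_mult_0 assms)

lemma coeff_ode_coeff_1:
  assumes "\<And>k. coeff (D k) 0 = 0"
  shows "coeff (ode_coeff D (Suc m)) 1 = coeff (D m) 1 / of_nat (Suc m)"
proof -
  have "(\<Sum>k\<le>m. coeff (ode_coeff D k * D (m - k)) 1) = (\<Sum>k\<le>m. if k = 0 then coeff (D m) 1 else 0)"
    by (intro sum.cong refl) (unfold coeff_mult_1, simp add: assms coeff_ode_coeff_0)
  then show ?thesis
    by (simp add: ode_coeff.simps(2) coeff_sum del: of_nat_Suc)
qed

lemma coeff_ode_coeff_2:
  assumes "\<And>k. coeff (D k) 0 = 0"
  shows "coeff (ode_coeff D (Suc m)) 2 = (coeff (D m) 2 +
     (\<Sum>k=1..m. coeff (D (k - 1)) 1 / of_nat k * coeff (D (m - k)) 1)) / of_nat (Suc m)"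
proof -
  have "(\<Sum>k\<le>m. coeff (ode_coeff D k * D (m - k)) 2)
      = (\<Sum>k\<le>m. (if k = 0 then coeff (D m) 2 else 0)
          + coeff (ode_coeff D k) 1 * coeff (D (m - k)) 1)"
    by (intro sum.cong refl) (unfold coeff_mult_2, simp add: assms coeff_ode_coeff_0)
  also have "\<dots> = coeff (D m) 2 + (\<Sum>k=1..m. coeff (ode_coeff D k) 1 * coeff (D (m - k)) 1)"
    by (simp add: sum.distrib atMost_atLeast0 sum.atLeast_Suc_atMost)
  also have "(\<Sum>k=1..m. coeff (ode_coeff D k) 1 * coeff (D (m - k)) 1)
      = (\<Sum>k=1..m. coeff (D (k - 1)) 1 / of_nat k * coeff (D (m - k)) 1)"
  proof (intro sum.cong refl)
    fix k :: nat
    assume "k \<in> {1..m}"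
    then have "Suc (k - 1) = k"
      by simp
    then show "coeff (ode_coeff D k) 1 * coeff (D (m - k)) 1
        = coeff (D (k - 1)) 1 / of_nat k * coeff (D (m - k)) 1"
      using coeff_ode_coeff_1[where m = "k - 1", OF assms] by simp
  qed
  finally show ?thesis
    by (simp add: ode_coeff.simps(2) coeff_sum del: of_nat_Suc)
qed

definition Aser :: "(nat \<Rightarrow> rat) \<Rightarrow> rat fps" where
  "Aser a = 1 + aser a * fps_X ^ 2"

lemma Aser_nth_0 [simp]: "Aser a $ 0 = 1"
  and Aser_nth_1 [simp]: "Aser a $ Suc 0 = 0"
  by (simp_all add: Aser_def fps_X_power_mult_right_nth)

lemma linear_factor_of_nat: "1 + of_nat i * fps_X = 1 + fps_const (of_nat i) * fps_X"
  and linear_factor_of_int: "1 + of_int l * fps_X = 1 + fps_const (of_int l) * fps_X"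
  by (simp_all add: fps_of_nat fps_of_int)

lemma Gser_nth_0 [simp]: "Gser a j $ 0 = 1"
  and Hser_nth_0 [simp]: "Hser a j $ 0 = 1"
  by (simp_all add: Gser_def Hser_def fps_nth_0_prod)

lemma sum_int_negative_interval: "(\<Sum>l\<in>{1 - int j..-1}. f l) = (\<Sum>i\<in>{1..<j}. f (- int i))"
proof -
  have "{1 - int j..-1} = (\<lambda>i. - int i) ` {1..<j}"
  proof (intro set_eqI iffI)
    fix l
    assume "l \<in> {1 - int j..-1}"
    then show "l \<in> (\<lambda>i. - int i) ` {1..<j}"
      by (intro image_eqI[of _ _ "nat (- l)"]) auto
  qed auto
  then show ?thesis
    by (simp add: sum.reindex inj_on_def)
qed

lemma fps_logderiv_Gser_Aser:
  "fps_logderiv (Gser a j * Aser a) $ k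
     = (of_nat j + 1) * fps_logderiv (Aser a) $ k - (-1) ^ k * (\<Sum>i<j. of_nat i ^ Suc k)"
proof -
  define c where "c = fps_logderiv (Aser a) $ k"
  have G_prod: "Gser a j = (\<Prod>i<j. Aser a / (1 + fps_const (of_nat i) * fps_X))"
    by (simp add: Gser_def Aser_def linear_factor_of_nat lessThan_atLeast0)
  have "fps_logderiv (Gser a j)
      = (\<Sum>i<j. fps_logderiv (Aser a) - fps_logderiv (1 + fps_const (of_nat i) * fps_X))"
    unfolding G_prod by (rule fps_logderiv_prod_divide) simp_all
  then have "fps_logderiv (Gser a j * Aser a) $ k
      = (\<Sum>i<j. c - of_nat i * (- of_nat i) ^ k) + c"
    by (simp add: fps_logderiv_mult fps_sum_nth fps_logderiv_linear c_def)
  then show ?thesis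
    by (simp add: c_def sum_subtractf sum_distrib_left power_minus[of "of_nat _ :: rat"]
        algebra_simps)
qed

lemma fps_logderiv_Hser_Aser:
  assumes "j \<ge> 1"
  shows "fps_logderiv (Hser a j * Aser a) $ k
     = (2 - of_nat j) * fps_logderiv (Aser a) $ k - (\<Sum>i<j. of_nat i ^ Suc k)"
proof -
  define c where "c = fps_logderiv (Aser a) $ k"
  have H_prod: "Hser a j = (\<Prod>l\<in>{1 - int j..-1}. (1 + fps_const (of_int l) * fps_X) / Aser a)"
    by (simp add: Hser_def Aser_def linear_factor_of_int)
  have "fps_logderiv (Hser a j)
      = (\<Sum>l\<in>{1 - int j..-1}.
          fps_logderiv (1 + fps_const (of_int l) * fps_X) - fps_logderiv (Aser a))"
    unfolding H_prod by (rule fps_logderiv_prod_divide) simp_all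
  then have "fps_logderiv (Hser a j * Aser a) $ k
      = (\<Sum>l\<in>{1 - int j..-1}. of_int l * (- of_int l) ^ k - c) + c"
    by (simp add: fps_logderiv_mult fps_sum_nth fps_logderiv_linear c_def)
  also have "\<dots> = - (\<Sum>i\<in>{1..<j}. of_nat i ^ Suc k) - of_nat (j - 1) * c + c"
    by (simp only: sum_int_negative_interval) (simp add: sum_subtractf sum_negf)
  also have "(\<Sum>i\<in>{1..<j}. of_nat i ^ Suc k) = (\<Sum>i<j. of_nat i ^ Suc k :: rat)"
    by (rule sum.mono_neutral_left) auto
  finally show ?thesis
    using assms by (simp add: c_def of_nat_diff algebra_simps)
qed

definition G_logderiv_poly :: "(nat \<Rightarrow> rat) \<Rightarrow> nat \<Rightarrow> rat poly" where
  "G_logderiv_poly a k =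
     smult (fps_logderiv (Aser a) $ k) [:1, 1:] - smult ((-1) ^ k) (power_sum_poly (Suc k))"

definition H_logderiv_poly :: "(nat \<Rightarrow> rat) \<Rightarrow> nat \<Rightarrow> rat poly" where
  "H_logderiv_poly a k = smult (fps_logderiv (Aser a) $ k) [:2, -1:] - power_sum_poly (Suc k)"

lemma Gser_Aser_nth:
  "(Gser a j * Aser a) $ m = poly (ode_coeff (G_logderiv_poly a) m) (of_nat j)"
proof (rule fps_nth_eq_ode_coeff)
  show "(Gser a j * Aser a) $ 0 = 1"
    by simp
  show "fps_logderiv (Gser a j * Aser a) $ k = poly (G_logderiv_poly a k) (of_nat j)" for k
    by (simp add: G_logderiv_poly_def fps_logderiv_Gser_Aser poly_power_sum_poly)
      (simp add: algebra_simps)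
qed

lemma Hser_Aser_nth:
  assumes "j \<ge> 1"
  shows "(Hser a j * Aser a) $ m = poly (ode_coeff (H_logderiv_poly a) m) (of_nat j)"
proof (rule fps_nth_eq_ode_coeff)
  show "(Hser a j * Aser a) $ 0 = 1"
    by simp
  show "fps_logderiv (Hser a j * Aser a) $ k = poly (H_logderiv_poly a k) (of_nat j)" for k
    using assms by (simp add: H_logderiv_poly_def fps_logderiv_Hser_Aser poly_power_sum_poly)
      (simp add: algebra_simps)
qed

definition GH_diff_poly :: "(nat \<Rightarrow> rat) \<Rightarrow> nat \<Rightarrow> rat poly" where
  "GH_diff_poly a m = ode_coeff (G_logderiv_poly a) m - ode_coeff (H_logderiv_poly a) m"

lemma fps_logderiv_Aser_nth_0: "fps_logderiv (Aser a) $ 0 = 0"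
  by (simp add: fps_logderiv_def)

lemma GH_diff_poly_0: "GH_diff_poly a 0 = 0"
  and GH_diff_poly_1: "GH_diff_poly a 1 = 0"
  by (simp_all add: GH_diff_poly_def ode_coeff.simps(2) G_logderiv_poly_def H_logderiv_poly_def
      fps_logderiv_Aser_nth_0)

lemma lhs_coeff_eq_poly_GH_diff:
  assumes "j \<ge> 1" "N \<ge> 1"
  shows "lhs_coeff N a j = poly (GH_diff_poly a (N + 1)) (of_nat j)"
proof -
  define Y where "Y = Gser a j - Hser a j"
  have YA: "(Y * Aser a) $ m = poly (GH_diff_poly a m) (of_nat j)" for m
    using Gser_Aser_nth Hser_Aser_nth[OF assms(1)]
    by (simp add: Y_def GH_diff_poly_def algebra_simps)
  have Y0: "Y $ 0 = 0"
    using YA[of 0] by (simp add: GH_diff_poly_0)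
  have "(Y * Aser a) $ 1 = 0"
    using YA[of 1] by (simp only: GH_diff_poly_1 poly_0)
  then have Y1: "Y $ 1 = 0"
    using Y0 by (simp add: fps_mult_nth numeral_2_eq_2)
  have Y_shift: "Y = fps_shift 2 Y * fps_X ^ 2"
  proof (rule fps_ext)
    show "Y $ m = (fps_shift 2 Y * fps_X ^ 2) $ m" for m
      using Y0 Y1 by (cases m; cases "m - 1") (auto simp: fps_X_power_mult_right_nth)
  qed
  have "lhs_coeff N a j = (fps_shift 2 Y * Aser a * fps_X ^ 2) $ (N + 1)"
    using assms(2) by (simp add: lhs_coeff_def Y_def Aser_def fps_X_power_mult_right_nth)
  also have "\<dots> = (Y * Aser a) $ (N + 1)"
    by (subst (2) Y_shift) (simp only: ac_simps)
  finally show ?thesis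
    by (simp add: YA)
qed

lemma GH_diff_poly_pcompose_reflect: "GH_diff_poly a m \<circ>\<^sub>p [:1, -1:] = - GH_diff_poly a m"
proof -
  have "poly (H_logderiv_poly a k) x = poly (G_logderiv_poly a k) (1 - x)" for k x
    using poly_power_sum_poly_reflect[of "Suc k" x]
    by (simp add: G_logderiv_poly_def H_logderiv_poly_def algebra_simps flip: power_add mult_2)
  then have reflect: "poly (ode_coeff (H_logderiv_poly a) m) x
      = poly (ode_coeff (G_logderiv_poly a) m) (1 - x)" for x
    by (rule poly_ode_coeff_compose)
  show ?thesis
    by (rule poly_ext) (simp add: GH_diff_poly_def poly_pcompose reflect)
qed

lemma degree_GH_diff_poly: "degree (GH_diff_poly a m) \<le> 2 * m"
proof -
  have "degree (power_sum_poly (Suc k)) \<le> k + 2" for k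
    using degree_power_sum_poly[of "Suc k"] by simp
  then have "degree (G_logderiv_poly a k) \<le> k + 2" "degree (H_logderiv_poly a k) \<le> k + 2" for k
    unfolding G_logderiv_poly_def H_logderiv_poly_def
    by (auto intro!: degree_diff_le intro: order.trans[OF degree_smult_le])
  then show ?thesis
    unfolding GH_diff_poly_def by (intro degree_diff_le degree_ode_coeff)
qed

lemma S_spec_exists:
  assumes "N \<ge> 1"
  shows "\<exists>S. S_spec N S"
proof -
  have "\<exists>q. degree q \<le> N \<and> GH_diff_poly a (N + 1) = [:-1, 2:] * (q \<circ>\<^sub>p [:0, -1, 1:])" for a
  proof -
    obtain q where q: "GH_diff_poly a (N + 1) = [:-1, 2:] * (q \<circ>\<^sub>p [:0, -1, 1:])"
      using pcompose_reflect_anti_invariant_decomp[OF GH_diff_poly_pcompose_reflect] by blast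
    have "1 + 2 * degree q = degree (GH_diff_poly a (N + 1))" if "q \<noteq> 0"
      using that unfolding q
      by (subst degree_mult_eq) (auto simp: degree_pcompose pcompose_eq_0_iff)
    then have "degree q \<le> N"
      using degree_GH_diff_poly[of a "N + 1"] by (cases "q = 0") auto
    with q show ?thesis
      by blast
  qed
  then obtain Q where Q: "\<And>a. degree (Q a) \<le> N"
    "\<And>a. GH_diff_poly a (N + 1) = [:-1, 2:] * (Q a \<circ>\<^sub>p [:0, -1, 1:])"
    by metis
  define S where "S i a = (if i = 0 then coeff (Q a) 0 - a (N - 1) else coeff (Q a) i)" for i a
  have "S_spec N S"
    unfolding S_spec_def
  proof (intro allI impI)
    fix a :: "nat \<Rightarrow> rat" and j :: nat
    assume "1 \<le> j"
    define v :: rat where "v = of_nat j * (of_nat j - 1)"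
    have "lhs_coeff N a j = poly (GH_diff_poly a (N + 1)) (of_nat j)"
      using \<open>1 \<le> j\<close> assms by (rule lhs_coeff_eq_poly_GH_diff)
    also have "\<dots> = (2 * of_nat j - 1) * poly (Q a) v"
      unfolding Q(2) by (simp add: poly_pcompose v_def algebra_simps)
    also have "poly (Q a) v = a (N - 1) + S 0 a + (\<Sum>i=1..N. S i a * v ^ i)"
      by (simp add: poly_eq_sum_coeffs[OF Q(1)] S_def)
    finally show "lhs_coeff N a j = (2 * of_nat j - 1) *
        (a (N - 1) + S 0 a + (\<Sum>i=1..N. S i a * (of_nat j * (of_nat j - 1)) ^ i))"
      by (simp only: v_def)
  qed
  then show ?thesis
    by blast
qed

lemma G_logderiv_poly_zero:
    "G_logderiv_poly (\<lambda>_. 0) k = - smult ((-1) ^ k) (power_sum_poly (Suc k))"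
  and H_logderiv_poly_zero:
    "H_logderiv_poly (\<lambda>_. 0) k = - power_sum_poly (Suc k)"
proof -
  have "Aser (\<lambda>_. 0) = 1"
    by (simp add: Aser_def aser_def fps_zero_def[symmetric])
  then show "G_logderiv_poly (\<lambda>_. 0) k = - smult ((-1) ^ k) (power_sum_poly (Suc k))"
    and "H_logderiv_poly (\<lambda>_. 0) k = - power_sum_poly (Suc k)"
    by (simp_all add: G_logderiv_poly_def H_logderiv_poly_def fps_logderiv_def)
qed

lemma coeff_0_G_logderiv_poly_zero: "coeff (G_logderiv_poly (\<lambda>_. 0) k) 0 = 0"
  and coeff_0_H_logderiv_poly_zero: "coeff (H_logderiv_poly (\<lambda>_. 0) k) 0 = 0"
  and coeff_1_G_logderiv_poly_zero:
    "coeff (G_logderiv_poly (\<lambda>_. 0) k) 1 = - ((-1) ^ k * bernoulli (Suc k))"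
  and coeff_1_H_logderiv_poly_zero: "coeff (H_logderiv_poly (\<lambda>_. 0) k) 1 = - bernoulli (Suc k)"
  by (simp_all only: G_logderiv_poly_zero H_logderiv_poly_zero coeff_minus coeff_smult
      coeff_power_sum_poly_0 coeff_power_sum_poly_1 minus_zero mult_zero_right)

lemma coeffs_GH_diff_poly_zero:
  assumes "n \<ge> 2"
  shows "coeff (GH_diff_poly (\<lambda>_. 0) (2 * n)) 0 = 0"
    and "coeff (GH_diff_poly (\<lambda>_. 0) (2 * n)) 1 = bernoulli (2 * n) / of_nat n"
    and "coeff (GH_diff_poly (\<lambda>_. 0) (2 * n)) 2 = 0"
proof -
  define m where "m = 2 * n - 1"
  have n_eq: "2 * n = Suc m" and "odd m"
    using assms by (simp_all add: m_def)
  note G0 = coeff_0_G_logderiv_poly_zero and H0 = coeff_0_H_logderiv_poly_zero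
  note G1 = coeff_1_G_logderiv_poly_zero and H1 = coeff_1_H_logderiv_poly_zero
  show "coeff (GH_diff_poly (\<lambda>_. 0) (2 * n)) 0 = 0"
    using assms by (simp add: GH_diff_poly_def coeff_ode_coeff_0[OF G0] coeff_ode_coeff_0[OF H0])
  have "coeff (GH_diff_poly (\<lambda>_. 0) (Suc m)) 1
      = (coeff (G_logderiv_poly (\<lambda>_. 0) m) 1 - coeff (H_logderiv_poly (\<lambda>_. 0) m) 1) / of_nat (Suc m)"
    by (simp only: GH_diff_poly_def coeff_diff coeff_ode_coeff_1[OF G0] coeff_ode_coeff_1[OF H0]
        diff_divide_distrib)
  also have "\<dots> = 2 * bernoulli (Suc m) / (2 * of_nat n)"
    using \<open>odd m\<close> by (simp only: G1 H1 n_eq[symmetric]) simp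
  finally show "coeff (GH_diff_poly (\<lambda>_. 0) (2 * n)) 1 = bernoulli (2 * n) / of_nat n"
    by (simp add: n_eq)
  have "(\<Sum>k=1..m. coeff (G_logderiv_poly (\<lambda>_. 0) (k - 1)) 1 / of_nat k
        * coeff (G_logderiv_poly (\<lambda>_. 0) (m - k)) 1)
      = (\<Sum>k=1..m. coeff (H_logderiv_poly (\<lambda>_. 0) (k - 1)) 1 / of_nat k
        * coeff (H_logderiv_poly (\<lambda>_. 0) (m - k)) 1)"
  proof (intro sum.cong refl)
    fix k
    assume "k \<in> {1..m}"
    then have "even (k - 1 + (m - k))"
      using \<open>odd m\<close> by (auto elim!: oddE)
    then have "(-1 :: rat) ^ (k - 1) * (-1) ^ (m - k) = 1"
      by (simp flip: power_add)
    then show "coeff (G_logderiv_poly (\<lambda>_. 0) (k - 1)) 1 / of_nat k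
        * coeff (G_logderiv_poly (\<lambda>_. 0) (m - k)) 1
      = coeff (H_logderiv_poly (\<lambda>_. 0) (k - 1)) 1 / of_nat k
        * coeff (H_logderiv_poly (\<lambda>_. 0) (m - k)) 1"
      unfolding G1 H1 by (simp add: algebra_simps)
  qed
  moreover have "coeff (power_sum_poly (Suc m)) 2 = 0"
    using assms n_eq by (intro coeff_power_sum_poly_2) (simp_all flip: n_eq)
  ultimately show "coeff (GH_diff_poly (\<lambda>_. 0) (2 * n)) 2 = 0"
    by (simp add: GH_diff_poly_def n_eq coeff_ode_coeff_2[OF G0] coeff_ode_coeff_2[OF H0]
        G_logderiv_poly_zero H_logderiv_poly_zero)
qed

lemma S_spec_coeff_2_zero:
  assumes "n \<ge> 2" and "S_spec (2 * n - 1) S"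
  shows "S 2 (\<lambda>_. 0) = - 3 * bernoulli (2 * n) / of_nat n"
proof -
  define N where "N = 2 * n - 1"
  define c where "c i = S i (\<lambda>_. 0)" for i
  define q where "q = (\<Sum>i\<le>N. monom (c i) i)"
  have "N \<ge> 3" "N + 1 = 2 * n"
    using assms(1) by (simp_all add: N_def)
  have coeff_q: "coeff q i = c i" if "i \<le> 2" for i
    using that \<open>N \<ge> 3\<close> by (simp add: q_def coeff_sum)
  have "GH_diff_poly (\<lambda>_. 0) (2 * n) = [:-1, 2:] * (q \<circ>\<^sub>p [:0, -1, 1:])"
  proof (rule poly_eqI_of_nat)
    fix j :: nat
    assume "j \<ge> 1"
    define v :: rat where "v = of_nat j * (of_nat j - 1)"
    have "poly (GH_diff_poly (\<lambda>_. 0) (2 * n)) (of_nat j) = lhs_coeff N (\<lambda>_. 0) j"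
      using lhs_coeff_eq_poly_GH_diff[OF \<open>j \<ge> 1\<close>, of N] \<open>N \<ge> 3\<close> \<open>N + 1 = 2 * n\<close> by simp
    also have "\<dots> = (2 * of_nat j - 1) * (c 0 + (\<Sum>i=1..N. c i * v ^ i))"
      using assms(2) \<open>j \<ge> 1\<close> unfolding S_spec_def N_def[symmetric]
      by (simp add: c_def v_def)
    also have "c 0 + (\<Sum>i=1..N. c i * v ^ i) = poly q v"
      by (simp add: q_def poly_sum poly_monom atMost_atLeast0 sum.atLeast_Suc_atMost)
    finally show "poly (GH_diff_poly (\<lambda>_. 0) (2 * n)) (of_nat j)
        = poly ([:-1, 2:] * (q \<circ>\<^sub>p [:0, -1, 1:])) (of_nat j)"
      by (simp add: poly_pcompose v_def algebra_simps)
  qed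
  then have "coeff (GH_diff_poly (\<lambda>_. 0) (2 * n)) k
      = coeff ([:-1, 2:] * (q \<circ>\<^sub>p [:0, -1, 1:])) k" for k
    by simp
  from this[of 0] this[of 1] this[of 2] show ?thesis
    using coeffs_GH_diff_poly_zero[OF assms(1)] coeffs_pcompose_x2_minus_x[of q]
      coeff_q[of 0] coeff_q[of 1] coeff_q[of 2]
    by (simp add: numeral_2_eq_2 c_def)
qed

theorem proposition4p7:
  fixes n :: nat
  assumes "n \<ge> 2"
  shows "(\<exists>S. S_spec (2 * n - 1) S) \<and>
         (\<forall>S. S_spec (2 * n - 1) S \<longrightarrow>
              S 2 (\<lambda>_. 0) = - 3 * bernoulli (2 * n) / of_nat n)"
  using assms S_spec_exists[of "2 * n - 1"] S_spec_coeff_2_zero by auto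

end
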